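(* Let $\mathbf A\subset\mathbb Z^n_{\ge0}$ be a finite set not contained in any coordinate hyperplane $E_i=\{x_i=0\}$. Put $\Delta_i=\mathrm{Conv}(\mathbf A\setminus E_i)$ for $i=1,\dots,n$. Then: (1) $\Delta_1,\dots,\Delta_n$ are semi-interlaced in $(\mathrm{Conv}(\mathbf A),\mathbf A)$; (2) a proper face $K$ of $\mathrm{Conv}(\mathbf A)$ is a suture if and only if there is a coordinate subspace $E(K)$ with $K\subset E(K)$ and $\dim E(K)=\dim K$.
   Context: Let $A$ be a finite lattice set and $\mathbf P=\mathrm{Conv}(A)$. For a polytope $D$ with vertices in $A$, let $\mathcal D$ be the set of inclusion-maximal faces of $\mathbf P$ disjoint from $D$. $D$ is a daughter sub-polytope of $(\mathbf P,A)$ if these faces are pairwise disjoint and $D=\mathrm{Conv}(A\setminus\bigcup_{K\in\mathcal D}K)$. Daughter sub-polytopes $D_1,\dots,D_n$ are semi-interlaced in $(\mathbf P,A)$ if every face $\mathbf P^\gamma$, $\gamma\neq0$, is met by at least $\dim\mathbf P^\gamma$ of the $D_i$. Here $\mathbf P^\gamma$ is the face where $\gamma$ is minimal. A face is a suture if it is met by exactly as many $D_i$ as its dimension. *)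

theory Defs
  imports "HOL-Analysis.Analysis"
begin

definition min_face :: "(real^'n) set \<Rightarrow> real^'n \<Rightarrow> (real^'n) set" where
  "min_face P \<gamma> = {x \<in> P. \<forall>y\<in>P. \<gamma> \<bullet> x \<le> \<gamma> \<bullet> y}"

definition max_disjoint_faces :: "(real^'n) set \<Rightarrow> (real^'n) set \<Rightarrow> (real^'n) set set" where
  "max_disjoint_faces A D =
     {K. K face_of convex hull A \<and> K \<inter> D = {} \<and>
         (\<forall>K'. K' face_of convex hull A \<and> K' \<inter> D = {} \<and> K \<subseteq> K' \<longrightarrow> K' = K)}"

definition daughter :: "(real^'n) set \<Rightarrow> (real^'n) set \<Rightarrow> bool" where
  "daughter A D \<longleftrightarrow>
     (\<exists>V. V \<subseteq> A \<and> D = convex hull V) \<and>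
     pairwise disjnt (max_disjoint_faces A D) \<and>
     D = convex hull (A - \<Union>(max_disjoint_faces A D))"

definition meet_count :: "('i::finite \<Rightarrow> (real^'n) set) \<Rightarrow> (real^'n) set \<Rightarrow> nat" where
  "meet_count D K = card {i. D i \<inter> K \<noteq> {}}"

definition semi_interlaced :: "(real^'n) set \<Rightarrow> ('i::finite \<Rightarrow> (real^'n) set) \<Rightarrow> bool" where
  "semi_interlaced A D \<longleftrightarrow>
     (\<forall>i. daughter A (D i)) \<and>
     (\<forall>\<gamma>::real^'n. \<gamma> \<noteq> 0 \<longrightarrow>
        int (meet_count D (min_face (convex hull A) \<gamma>)) \<ge> aff_dim (min_face (convex hull A) \<gamma>))"

definition suture :: "(real^'n) set \<Rightarrow> ('i::finite \<Rightarrow> (real^'n) set) \<Rightarrow> (real^'n) set \<Rightarrow> bool" where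
  "suture A D K \<longleftrightarrow> K face_of convex hull A \<and> int (meet_count D K) = aff_dim K"

definition coord_subspace :: "'n set \<Rightarrow> (real^'n) set" where
  "coord_subspace I = {x. \<forall>i. i \<notin> I \<longrightarrow> x $ i = 0}"

end

theory Submission
  imports Defs
begin

text \<open>A face K of conv A is the convex hull of the points of A it contains, so D_i = conv(A - E_i)
  meets K exactly when some point of A in K has a nonzero i-th coordinate. Hence the number of
  D_i meeting K is the number of coordinates not identically zero on K, i.e. the dimension of the
  smallest coordinate subspace containing K. This bounds aff_dim K from above, which is
  semi-interlacing, and equality means precisely that this coordinate subspace has the dimension
  of K. Each D_i is a daughter because its only maximal disjoint face is conv A \<inter> E_i,
  cut out by the supporting hyperplane x_i = 0.\<close>

lemma subspace_coord_subspace: "subspace (coord_subspace I)"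
  unfolding coord_subspace_def subspace_vec_eq[symmetric] by (rule subspace_substandard_cart)

lemma dim_coord_subspace: "dim (coord_subspace (I::'n::finite set)) = card I"
  unfolding coord_subspace_def dim_vec_eq[symmetric] by (rule dim_substandard_cart)

definition coord_support :: "(real^'n) set \<Rightarrow> 'n set" where
  "coord_support S = {i. \<exists>x\<in>S. x $ i \<noteq> 0}"

lemma subset_coord_subspace_iff: "S \<subseteq> coord_subspace I \<longleftrightarrow> coord_support S \<subseteq> I"
  unfolding coord_subspace_def coord_support_def by blast

lemma coord_support_convex_hull: "coord_support (convex hull S) = coord_support S"
proof
  have "convex hull S \<subseteq> coord_subspace (coord_support S)"
    by (rule hull_minimal)
      (simp_all add: subset_coord_subspace_iff subspace_imp_convex subspace_coord_subspace)
  then show "coord_support (convex hull S) \<subseteq> coord_support S"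
    by (simp only: subset_coord_subspace_iff)
  show "coord_support S \<subseteq> coord_support (convex hull S)"
    unfolding coord_support_def using hull_subset[of S convex] by blast
qed

lemma aff_dim_le_card_coord_support: "aff_dim S \<le> int (card (coord_support S))"
proof -
  have "aff_dim S \<le> aff_dim (coord_subspace (coord_support S))"
    by (simp add: aff_dim_subset subset_coord_subspace_iff)
  also have "\<dots> = int (card (coord_support S))"
    by (simp add: aff_dim_subspace[OF subspace_coord_subspace] dim_coord_subspace)
  finally show ?thesis .
qed

lemma ex_coord_subspace_dim_eq_aff_dim_iff:
  "(\<exists>I. S \<subseteq> coord_subspace I \<and> int (dim (coord_subspace I)) = aff_dim S)
     \<longleftrightarrow> int (card (coord_support S)) = aff_dim S"
proof
  assume "\<exists>I. S \<subseteq> coord_subspace I \<and> int (dim (coord_subspace I)) = aff_dim S"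
  then obtain I where "coord_support S \<subseteq> I" "int (card I) = aff_dim S"
    by (auto simp: subset_coord_subspace_iff dim_coord_subspace)
  then have "card (coord_support S) \<le> card I" by (simp add: card_mono)
  with \<open>int (card I) = aff_dim S\<close> aff_dim_le_card_coord_support[of S]
  show "int (card (coord_support S)) = aff_dim S" by linarith
next
  assume "int (card (coord_support S)) = aff_dim S"
  then show "\<exists>I. S \<subseteq> coord_subspace I \<and> int (dim (coord_subspace I)) = aff_dim S"
    by (metis dim_coord_subspace subset_coord_subspace_iff order_refl)
qed

lemma face_of_convex_hull_eq_convex_hull_Int:
  fixes A :: "'a::euclidean_space set"
  assumes "compact A" "K face_of convex hull A"
  shows "K = convex hull (A \<inter> K)"
proof -
  obtain A' where "A' \<subseteq> A" and K: "K = convex hull A'"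
    using face_of_convex_hull_subset[OF assms] .
  then have "A' \<subseteq> A \<inter> K" using hull_subset[of A' convex] by blast
  then have "K \<subseteq> convex hull (A \<inter> K)" unfolding K by (rule hull_mono)
  moreover have "convex hull (A \<inter> K) \<subseteq> K"
    using face_of_imp_convex[OF assms(2)] by (simp add: hull_minimal)
  ultimately show ?thesis by blast
qed

lemma convex_hull_Int_face_eq_empty_iff:
  fixes B :: "'a::euclidean_space set"
  assumes "compact B" "K face_of S" "convex hull B \<subseteq> S"
  shows "convex hull B \<inter> K = {} \<longleftrightarrow> B \<inter> K = {}"
proof
  assume "B \<inter> K = {}"
  \<comment> \<open>K \<inter> conv B is a face of conv B, hence the hull of points of B, all lying in K.\<close>
  have "(K \<inter> convex hull B) face_of (S \<inter> convex hull B)"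
    by (simp add: face_of_slice assms(2))
  then have "(K \<inter> convex hull B) face_of convex hull B"
    using assms(3) by (simp add: Int_absorb1)
  then obtain B' where "B' \<subseteq> B" and hull_B': "K \<inter> convex hull B = convex hull B'"
    using face_of_convex_hull_subset[OF assms(1)] by blast
  then have "B' \<subseteq> B \<inter> K"
    using hull_subset[of B' convex] by blast
  with \<open>B \<inter> K = {}\<close> have "B' = {}" by blast
  with hull_B' show "convex hull B \<inter> K = {}" by auto
qed (use hull_subset[of B convex] in blast)

lemma face_of_min_face:
  fixes P :: "(real^'n) set"
  assumes "convex P"
  shows "min_face P \<gamma> face_of P"
proof (cases "min_face P \<gamma> = {}")
  case False
  then obtain x0 where x0: "x0 \<in> P" "\<forall>y\<in>P. \<gamma> \<bullet> x0 \<le> \<gamma> \<bullet> y"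
    unfolding min_face_def by blast
  then have "min_face P \<gamma> = P \<inter> {x. \<gamma> \<bullet> x = \<gamma> \<bullet> x0}"
    unfolding min_face_def by force
  with x0 show ?thesis
    using face_of_Int_supporting_hyperplane_ge[OF assms, where a=\<gamma> and b="\<gamma> \<bullet> x0"] by simp
qed simp

lemma daughter_convex_hull_strict_halfspace:
  assumes "finite A" and A_ge: "\<forall>x\<in>A. b \<le> c \<bullet> x"
  shows "daughter A (convex hull {x \<in> A. b < c \<bullet> x})"
proof -
  define P where "P = convex hull A"
  define D where "D = convex hull {x \<in> A. b < c \<bullet> x}"
  define F where "F = P \<inter> {x. c \<bullet> x = b}"
  have "P \<subseteq> {x. b \<le> c \<bullet> x}"
    unfolding P_def using A_ge by (intro hull_minimal convex_halfspace_ge) auto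
  then have F_face: "F face_of P"
    unfolding F_def P_def by (intro face_of_Int_supporting_hyperplane_ge) auto
  have "D \<subseteq> {x. b < c \<bullet> x}"
    unfolding D_def by (intro hull_minimal convex_halfspace_gt) auto
  then have F_D: "F \<inter> D = {}" unfolding F_def by auto
  have below_F: "K \<subseteq> F" if K: "K face_of P" "K \<inter> D = {}" for K
  proof -
    have "compact {x \<in> A. b < c \<bullet> x}" using \<open>finite A\<close> by (simp add: finite_imp_compact)
    moreover have "convex hull {x \<in> A. b < c \<bullet> x} \<subseteq> P"
      unfolding P_def by (rule hull_mono) blast
    ultimately have "{x \<in> A. b < c \<bullet> x} \<inter> K = {}"
      using convex_hull_Int_face_eq_empty_iff[OF _ K(1)] K(2) unfolding D_def by blast
    with A_ge have "A \<inter> K \<subseteq> {x. c \<bullet> x = b}" by force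
    then have "convex hull (A \<inter> K) \<subseteq> {x. c \<bullet> x = b}"
      by (simp add: convex_hyperplane hull_minimal)
    then show "K \<subseteq> F"
      using face_of_convex_hull_eq_convex_hull_Int[OF finite_imp_compact[OF \<open>finite A\<close>]] K(1)
        face_of_imp_subset unfolding F_def P_def by blast
  qed
  have max_faces: "max_disjoint_faces A D = {F}"
    unfolding max_disjoint_faces_def P_def[symmetric]
    using F_face F_D below_F by blast
  have "A - F = {x \<in> A. b < c \<bullet> x}"
    unfolding F_def P_def using A_ge hull_subset[of A convex] by force
  then show ?thesis
    unfolding daughter_def D_def[symmetric] max_faces by (auto simp: D_def)
qed

lemma meet_count_coordinate_daughters:
  assumes "finite A" "K face_of convex hull A"
  shows "meet_count (\<lambda>i. convex hull {a \<in> A. a $ i \<noteq> 0}) K = card (coord_support K)"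
proof -
  have "convex hull {a \<in> A. a $ i \<noteq> 0} \<inter> K \<noteq> {} \<longleftrightarrow> i \<in> coord_support (A \<inter> K)" for i
  proof -
    have "compact {a \<in> A. a $ i \<noteq> 0}" using assms(1) by (simp add: finite_imp_compact)
    moreover have "convex hull {a \<in> A. a $ i \<noteq> 0} \<subseteq> convex hull A" by (rule hull_mono) blast
    ultimately have "convex hull {a \<in> A. a $ i \<noteq> 0} \<inter> K = {} \<longleftrightarrow> {a \<in> A. a $ i \<noteq> 0} \<inter> K = {}"
      by (rule convex_hull_Int_face_eq_empty_iff[OF _ assms(2)])
    then show ?thesis unfolding coord_support_def by blast
  qed
  moreover have "coord_support (A \<inter> K) = coord_support K"
    by (metis assms coord_support_convex_hull face_of_convex_hull_eq_convex_hull_Int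
        finite_imp_compact)
  ultimately show ?thesis unfolding meet_count_def by simp
qed

theorem lemma6p1:
  fixes A :: "(real^'n) set"
  assumes "finite A"
    and "\<forall>a\<in>A. \<forall>i. a $ i \<in> \<int> \<and> a $ i \<ge> 0"
    and "\<forall>i. \<not> A \<subseteq> {x. x $ i = 0}"
  defines "\<Delta> \<equiv> (\<lambda>i. convex hull {a \<in> A. a $ i \<noteq> 0})"
  shows "semi_interlaced A \<Delta> \<and>
         (\<forall>K. K face_of convex hull A \<and> K \<noteq> {} \<and> K \<noteq> convex hull A \<longrightarrow>
           (suture A \<Delta> K \<longleftrightarrow>
            (\<exists>I. K \<subseteq> coord_subspace I \<and> int (dim (coord_subspace I)) = aff_dim K)))"
proof -
  have count: "meet_count \<Delta> K = card (coord_support K)" if "K face_of convex hull A" for K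
    unfolding \<Delta>_def using meet_count_coordinate_daughters[OF assms(1) that] .
  have daughters: "daughter A (\<Delta> i)" for i
  proof -
    have "\<forall>a\<in>A. 0 \<le> axis i 1 \<bullet> a" and "{a \<in> A. a $ i \<noteq> 0} = {a \<in> A. 0 < axis i 1 \<bullet> a}"
      using assms(2) by (auto simp: inner_axis' less_le)
    then show ?thesis
      unfolding \<Delta>_def using daughter_convex_hull_strict_halfspace[OF assms(1), of 0 "axis i 1"]
      by simp
  qed
  have "aff_dim (min_face (convex hull A) \<gamma>) \<le> int (meet_count \<Delta> (min_face (convex hull A) \<gamma>))"
    for \<gamma>
    using count[OF face_of_min_face[OF convex_convex_hull]] aff_dim_le_card_coord_support by simp
  with daughters have "semi_interlaced A \<Delta>"
    unfolding semi_interlaced_def by blast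
  moreover have "suture A \<Delta> K \<longleftrightarrow>
      (\<exists>I. K \<subseteq> coord_subspace I \<and> int (dim (coord_subspace I)) = aff_dim K)"
    if "K face_of convex hull A" for K
    unfolding suture_def ex_coord_subspace_dim_eq_aff_dim_iff count[OF that] using that by blast
  ultimately show ?thesis by blast
qed

end
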